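(* Let $(X,f)$ be a dynamical system and $\mathbf{a}=(a_1,\dots,a_r)\in\mathbb{N}^r_*$. The following are equivalent: (1) $(X,f)$ is multi-minimal with respect to $\mathbf{a}$, i.e. $(X^r,f^{a_1}\times\dots\times f^{a_r})$ is minimal; (2) $(X,f)$ is $\mathcal{F}_s[\mathbf{a}]$-point transitive; (3) $Trans_{\mathcal{F}_s[\mathbf{a}]}(X,f)=X$. Consequently (taking all $\mathbf{a}=(1,2,\dots,i)$), the following are also equivalent: (1') $(X,f)$ is multi-minimal; (2') $(X,f)$ is $\mathcal{F}_s[\infty]$-point transitive; (3') $Trans_{\mathcal{F}_s[\infty]}(X,f)=X$.
   Context: A dynamical system is a pair $(X,f)$ with $X$ a compact metric space and $f:X\to X$ continuous. $\mathbb{N}=\{1,2,\dots\}$, $\mathbb{Z}_+=\{0,1,2,\dots\}$, $\mathbb{N}^r_*=\{(n_1,\dots,n_r)\in\mathbb{N}^r: n_1<\dots<n_r\}$. A system is minimal if it has no proper non-empty closed invariant subset; $(X,f)$ is multi-minimal if $(X^n,f\times f^2\times\dots\times f^n)$ is minimal for every $n\in\mathbb{N}$. $N(x,U)=\{n\in\mathbb{N}: f^n(x)\in U\}$. For a family $\mathcal{F}$ of subsets of $\mathbb{N}$, $x$ is an $\mathcal{F}$-transitive point if $N(x,U)\in\mathcal{F}$ for every non-empty open $U\subset X$; $Trans_{\mathcal{F}}(X,f)$ is the set of such points, and $(X,f)$ is $\mathcal{F}$-point transitive if it is non-empty. A set $F\subset\mathbb{N}$ is syndetic if there is $N$ with $\{n,\dots,n+N\}\cap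 F\ne\emptyset$ for all $n\in\mathbb{N}$. For $\mathbf{a}\in\mathbb{N}^r$, $\mathcal{F}_s[\mathbf{a}]$ is the collection of $F\subset\mathbb{N}$ such that for every $n_1,\dots,n_r\in\mathbb{Z}_+$ there is a syndetic set $F'\subset\mathbb{N}$ with $a_iF'+n_i=\{a_im+n_i:m\in F'\}\subset F$ for all $i=1,\dots,r$. $\mathcal{F}_s[\infty]=\bigcap_{i=1}^\infty\mathcal{F}_s[(1,2,\dots,i)]$. *)

theory Defs
  imports "HOL-Analysis.Analysis"
begin

definition minimal_sys :: "'b topology \<Rightarrow> ('b \<Rightarrow> 'b) \<Rightarrow> bool" where
  "minimal_sys T g \<longleftrightarrow> g ` topspace T \<subseteq> topspace T \<and>
     (\<forall>A. closedin T A \<and> A \<noteq> {} \<and> g ` A \<subseteq> A \<longrightarrow> A = topspace T)"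

text \<open>Elements of N^r_*: strictly increasing lists of positive naturals, r = length.\<close>
definition admissible_vec :: "nat list \<Rightarrow> bool" where
  "admissible_vec a \<longleftrightarrow> length a \<ge> 1 \<and> sorted_wrt (<) a \<and> (\<forall>i<length a. a ! i \<ge> 1)"

definition prod_space :: "'a::topological_space set \<Rightarrow> nat \<Rightarrow> (nat \<Rightarrow> 'a) topology" where
  "prod_space X r = product_topology (\<lambda>_. top_of_set X) {..<r}"

definition prod_map :: "('a \<Rightarrow> 'a) \<Rightarrow> nat list \<Rightarrow> (nat \<Rightarrow> 'a) \<Rightarrow> (nat \<Rightarrow> 'a)" where
  "prod_map f a x = restrict (\<lambda>i. (f ^^ (a ! i)) (x i)) {..<length a}"

definition multi_minimal_wrt :: "'a::topological_space set \<Rightarrow> ('a \<Rightarrow> 'a) \<Rightarrow> nat list \<Rightarrow> bool" where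
  "multi_minimal_wrt X f a \<longleftrightarrow> minimal_sys (prod_space X (length a)) (prod_map f a)"

definition multi_minimal :: "'a::topological_space set \<Rightarrow> ('a \<Rightarrow> 'a) \<Rightarrow> bool" where
  "multi_minimal X f \<longleftrightarrow> (\<forall>n\<ge>1. multi_minimal_wrt X f [1..<n+1])"

text \<open>Subsets of N = {1,2,...} are represented as nat sets.\<close>
definition syndetic :: "nat set \<Rightarrow> bool" where
  "syndetic F \<longleftrightarrow> (\<exists>N. \<forall>n\<ge>1. \<exists>m\<in>F. n \<le> m \<and> m \<le> n + N)"

definition Fs :: "nat list \<Rightarrow> nat set \<Rightarrow> bool" where
  "Fs a F \<longleftrightarrow> (\<forall>ns. length ns = length a \<longrightarrow>
      (\<exists>F'. 0 \<notin> F' \<and> syndetic F' \<and> (\<forall>i<length a. \<forall>m\<in>F'. a ! i * m + ns ! i \<in> F)))"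

definition Fs_inf :: "nat set \<Rightarrow> bool" where
  "Fs_inf F \<longleftrightarrow> (\<forall>i\<ge>1. Fs [1..<i+1] F)"

definition hit_times :: "('a \<Rightarrow> 'a) \<Rightarrow> 'a \<Rightarrow> 'a set \<Rightarrow> nat set" where
  "hit_times f x U = {n. n \<ge> 1 \<and> (f ^^ n) x \<in> U}"

definition Trans_F :: "'a::topological_space set \<Rightarrow> ('a \<Rightarrow> 'a) \<Rightarrow> (nat set \<Rightarrow> bool) \<Rightarrow> 'a set" where
  "Trans_F X f Fam = {x \<in> X. \<forall>U. openin (top_of_set X) U \<and> U \<noteq> {} \<longrightarrow> Fam (hit_times f x U)}"

end

theory Submission
  imports Defs
begin

text \<open>In a compact minimal system every point returns to every non-empty open set
  along a syndetic set of times. Applied in X^r to the tuple (f^n_1 x, ..., f^n_r x) and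
  the box U^r, this yields exactly the syndetic sets demanded by F_s[a], so minimality of
  f^a_1 \<times> ... \<times> f^a_r makes every point F_s[a]-transitive. Conversely, if x is
  F_s[a]-transitive, each such tuple is uniformly recurrent and has the diagonal point
  (x, ..., x) in its orbit closure; uniform recurrence then puts all these tuples, which are
  dense in X^r, into the orbit closure of the diagonal point, and a uniformly recurrent
  point with dense orbit generates a minimal system.\<close>

definition orbit :: "('b \<Rightarrow> 'b) \<Rightarrow> 'b \<Rightarrow> 'b set" where
  "orbit g y = range (\<lambda>k. (g ^^ k) y)"

definition uniformly_recurrent :: "'b topology \<Rightarrow> ('b \<Rightarrow> 'b) \<Rightarrow> 'b \<Rightarrow> bool" where
  "uniformly_recurrent T g y \<longleftrightarrow>
     (\<forall>V. openin T V \<and> y \<in> V \<longrightarrow> (\<exists>L. \<forall>k. \<exists>l\<le>L. (g ^^ (k + l)) y \<in> V))"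

lemma continuous_map_funpow:
  assumes "continuous_map T T g"
  shows "continuous_map T T (g ^^ n)"
proof (induction n)
  case (Suc n)
  then show ?case
    using continuous_map_compose[OF Suc assms] by (simp add: o_def)
qed simp

lemma funpow_mem_invariant: "g ` A \<subseteq> A \<Longrightarrow> y \<in> A \<Longrightarrow> (g ^^ n) y \<in> A"
  by (induction n) auto

lemma orbit_subset_invariant: "g ` A \<subseteq> A \<Longrightarrow> y \<in> A \<Longrightarrow> orbit g y \<subseteq> A"
  by (auto simp: orbit_def intro: funpow_mem_invariant)

lemma self_in_orbit: "y \<in> orbit g y"
  unfolding orbit_def by (metis funpow_0 rangeI)

lemma image_orbit_subset: "g ` orbit g y \<subseteq> orbit g y"
  unfolding orbit_def by (auto simp flip: funpow.simps(2) comp_apply[of g])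

lemma orbit_subset_topspace:
  "continuous_map T T g \<Longrightarrow> y \<in> topspace T \<Longrightarrow> orbit g y \<subseteq> topspace T"
  by (simp add: continuous_map_image_subset_topspace orbit_subset_invariant)

lemma closure_orbit_invariant:
  assumes "continuous_map T T g"
  shows "g ` (T closure_of orbit g y) \<subseteq> T closure_of orbit g y"
  using continuous_map_image_closure_subset[OF assms] closure_of_mono[OF image_orbit_subset]
  by (rule order_trans)

text \<open>If y were outside A, regularity gives a neighbourhood W of
  y whose closure misses A. Points of A never enter that closure, so
  near a there is an open set of points avoiding it for L consecutive steps,
  while the orbit of y visits W in every window of length L.\<close>
lemma uniformly_recurrent_mem_closed_invariant:
  assumes "regular_space T" and g: "continuous_map T T g"
    and ur: "uniformly_recurrent T g y" and y: "y \<in> topspace T"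
    and a: "a \<in> T closure_of orbit g y"
    and A: "closedin T A" "g ` A \<subseteq> A" "a \<in> A"
  shows "y \<in> A"
proof (rule ccontr)
  assume "y \<notin> A"
  then obtain W where W: "openin T W" "y \<in> W" "disjnt A (T closure_of W)"
    using assms(1) A(1) y unfolding regular_space by blast
  then obtain L where L: "\<forall>k. \<exists>l\<le>L. (g ^^ (k + l)) y \<in> W"
    using ur unfolding uniformly_recurrent_def by blast
  define K where "K = (\<Inter>l\<in>{..L}. {p \<in> topspace T. (g ^^ l) p \<in> topspace T - T closure_of W})"
  have "openin T K"
    unfolding K_def
  proof (rule openin_INT2)
    fix l
    show "openin T {p \<in> topspace T. (g ^^ l) p \<in> topspace T - T closure_of W}"
      by (rule openin_continuous_map_preimage[OF continuous_map_funpow[OF g]])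
        (simp add: openin_diff)
  qed auto
  moreover have "a \<in> K"
  proof -
    have "(g ^^ l) a \<in> A" for l
      using funpow_mem_invariant[OF A(2,3)] .
    then show ?thesis
      using W(3) closedin_subset[OF A(1)] A(3) by (auto simp: K_def disjnt_iff)
  qed
  ultimately obtain k where k: "(g ^^ k) y \<in> K"
    using a unfolding in_closure_of orbit_def by blast
  obtain l where "l \<le> L" "(g ^^ (k + l)) y \<in> W"
    using L by blast
  moreover have "(g ^^ (k + l)) y = (g ^^ l) ((g ^^ k) y)"
    by (subst add.commute) (simp add: funpow_add)
  ultimately show False
    using k closure_of_subset[OF openin_subset[OF W(1)]] by (auto simp: K_def)
qed

lemma minimal_sys_if_uniformly_recurrent_dense_orbit:
  assumes "regular_space T" and g: "continuous_map T T g"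
    and "uniformly_recurrent T g y" and "y \<in> topspace T"
    and dense: "T closure_of orbit g y = topspace T"
  shows "minimal_sys T g"
  unfolding minimal_sys_def
proof (intro conjI allI impI)
  show "g ` topspace T \<subseteq> topspace T"
    using g by (rule continuous_map_image_subset_topspace)
  fix A assume A: "closedin T A \<and> A \<noteq> {} \<and> g ` A \<subseteq> A"
  then obtain a where a: "a \<in> A" by blast
  then have "a \<in> T closure_of orbit g y"
    using dense A closedin_subset by blast
  then have "y \<in> A"
    using uniformly_recurrent_mem_closed_invariant[OF assms(1-4) _ _ _ a] A by blast
  then have "T closure_of orbit g y \<subseteq> A"
    using A orbit_subset_invariant closure_of_minimal by metis
  then show "A = topspace T"
    using dense A closedin_subset by blast
qed

lemma minimal_sys_closed_invariant_eq:
  "minimal_sys T g \<Longrightarrow> closedin T A \<Longrightarrow> a \<in> A \<Longrightarrow> g ` A \<subseteq> A \<Longrightarrow> A = topspace T"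
  unfolding minimal_sys_def by blast

lemma minimal_sys_visits_open:
  assumes g: "continuous_map T T g" and "minimal_sys T g"
    and V: "openin T V" "V \<noteq> {}" and p: "p \<in> topspace T"
  shows "\<exists>k\<ge>1. (g ^^ k) p \<in> V"
proof -
  define C where "C = T closure_of orbit g (g p)"
  have "g p \<in> topspace T"
    using continuous_map_image_subset_topspace[OF g] p by blast
  then have "g p \<in> C"
    unfolding C_def using closure_of_subset[OF orbit_subset_topspace[OF g]] self_in_orbit[of "g p" g]
    by blast
  then have "C = topspace T"
    using minimal_sys_closed_invariant_eq[OF assms(2) _ _ closure_orbit_invariant[OF g]]
    by (simp add: C_def)
  then obtain q where "q \<in> V" "q \<in> C"
    using V openin_subset by fastforce
  then obtain k where "(g ^^ k) (g p) \<in> V"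
    using V(1) unfolding C_def in_closure_of orbit_def by blast
  then have "(g ^^ Suc k) p \<in> V"
    by (simp only: funpow_Suc_right comp_apply)
  then show ?thesis
    by (intro exI[of _ "Suc k"]) simp
qed

text \<open>By compactness finitely many of the preimages of V under g^k, k \<ge> 1,
  cover the space.\<close>
lemma minimal_sys_bounded_return_gaps:
  assumes "compact_space T" and g: "continuous_map T T g" and "minimal_sys T g"
    and V: "openin T V" "V \<noteq> {}" and y: "y \<in> topspace T"
  shows "\<exists>K. \<forall>n. \<exists>k. 1 \<le> k \<and> k \<le> K \<and> (g ^^ (n + k)) y \<in> V"
proof -
  define U where "U = (\<lambda>k. {p \<in> topspace T. (g ^^ k) p \<in> V}) ` {1..}"
  have "\<forall>u\<in>U. openin T u"
    unfolding U_def by (auto intro: openin_continuous_map_preimage continuous_map_funpow[OF g] V(1))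
  moreover have "topspace T \<subseteq> \<Union>U"
    unfolding U_def using minimal_sys_visits_open[OF g assms(3) V] by fastforce
  ultimately obtain F where F: "finite F" "F \<subseteq> U" "topspace T \<subseteq> \<Union>F"
    using assms(1) unfolding compact_space_alt by meson
  then obtain I where I: "finite I" "I \<subseteq> {1..}" "F = (\<lambda>k. {p \<in> topspace T. (g ^^ k) p \<in> V}) ` I"
    unfolding U_def by (meson finite_subset_image)
  have "\<exists>k. 1 \<le> k \<and> k \<le> Max (insert 0 I) \<and> (g ^^ (n + k)) y \<in> V" for n
  proof -
    have "(g ^^ n) y \<in> topspace T"
      using orbit_subset_topspace[OF g y] unfolding orbit_def by blast
    then obtain k where "k \<in> I" "(g ^^ k) ((g ^^ n) y) \<in> V"
      using F(3) I(3) by auto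
    then show ?thesis
      using I by (intro exI[of _ k]) (auto simp: funpow_add add.commute)
  qed
  then show ?thesis by blast
qed

lemma syndetic_iff_bounded_gaps:
  "syndetic F \<longleftrightarrow> (\<exists>L. \<forall>k. \<exists>l. 1 \<le> l \<and> l \<le> L \<and> k + l \<in> F)"
proof
  assume "syndetic F"
  then obtain N where N: "\<forall>n\<ge>1. \<exists>m\<in>F. n \<le> m \<and> m \<le> n + N"
    unfolding syndetic_def by blast
  have "\<exists>l. 1 \<le> l \<and> l \<le> N + 1 \<and> k + l \<in> F" for k
  proof -
    obtain m where "m \<in> F" "k + 1 \<le> m" "m \<le> k + 1 + N"
      using N by (meson le_add2)
    then show ?thesis by (intro exI[of _ "m - k"]) auto
  qed
  then show "\<exists>L. \<forall>k. \<exists>l. 1 \<le> l \<and> l \<le> L \<and> k + l \<in> F" by blast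
next
  assume "\<exists>L. \<forall>k. \<exists>l. 1 \<le> l \<and> l \<le> L \<and> k + l \<in> F"
  then obtain L where L: "\<forall>k. \<exists>l. 1 \<le> l \<and> l \<le> L \<and> k + l \<in> F" by blast
  have "\<exists>m\<in>F. n \<le> m \<and> m \<le> n + L" if "n \<ge> 1" for n
  proof -
    obtain l where "1 \<le> l" "l \<le> L" "n - 1 + l \<in> F"
      using L by blast
    then show ?thesis
      using that by (intro bexI[of _ "n - 1 + l"]) auto
  qed
  then show "syndetic F"
    unfolding syndetic_def by blast
qed

lemma continuous_map_top_of_set_self:
  "continuous_on X f \<Longrightarrow> f ` X \<subseteq> X \<Longrightarrow> continuous_map (top_of_set X) (top_of_set X) f"
  by (simp add: continuous_map_in_subtopology image_subset_iff_funcset[symmetric])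

lemma topspace_prod_space [simp]: "topspace (prod_space X r) = PiE {..<r} (\<lambda>_. X)"
  unfolding prod_space_def by simp

lemma compact_space_prod_space: "compact X \<Longrightarrow> compact_space (prod_space X r)"
  unfolding prod_space_def compact_space_product_topology
  using compact_space_subtopology[of euclidean X] by simp

lemma regular_space_prod_space: "regular_space (prod_space (X::'a::metric_space set) r)"
  unfolding prod_space_def regular_space_product_topology
  using regular_space_subtopology[OF regular_space_euclidean] by blast

lemma openin_prod_space_PiE:
  "(\<And>i. i < r \<Longrightarrow> openin (top_of_set X) (U i)) \<Longrightarrow> openin (prod_space X r) (PiE {..<r} U)"
  unfolding prod_space_def openin_PiE_gen by auto

lemma openin_prod_space_box:
  assumes "openin (prod_space X r) V" "q \<in> V"
  obtains U where "\<And>i. i < r \<Longrightarrow> openin (top_of_set X) (U i)"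
    "q \<in> PiE {..<r} U" "PiE {..<r} U \<subseteq> V"
  using assms unfolding prod_space_def openin_product_topology_alt by (metis lessThan_iff)

lemma continuous_map_prod_map:
  assumes "continuous_map (top_of_set X) (top_of_set X) f"
  shows "continuous_map (prod_space X (length a)) (prod_space X (length a)) (prod_map f a)"
  unfolding prod_space_def continuous_map_componentwise
proof (intro conjI ballI)
  show "prod_map f a ` topspace (product_topology (\<lambda>_. top_of_set X) {..<length a})
    \<subseteq> extensional {..<length a}"
    unfolding prod_map_def by auto
  fix i assume i: "i \<in> {..<length a}"
  then have "(\<lambda>x. prod_map f a x i) = (f ^^ (a ! i)) \<circ> (\<lambda>x. x i)"
    unfolding prod_map_def by auto
  then show "continuous_map (product_topology (\<lambda>_. top_of_set X) {..<length a}) (top_of_set X)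
      (\<lambda>x. prod_map f a x i)"
    using continuous_map_compose[OF continuous_map_product_projection[OF i]
        continuous_map_funpow[OF assms]] by simp
qed

lemma funpow_prod_map:
  assumes "i < length a"
  shows "(prod_map f a ^^ m) x i = (f ^^ (a ! i * m)) (x i)"
proof (induction m)
  case (Suc m)
  then show ?case
    using assms by (simp add: prod_map_def funpow_add[symmetric, THEN fun_cong, simplified])
qed simp

definition orbit_tuple :: "('a \<Rightarrow> 'a) \<Rightarrow> 'a \<Rightarrow> nat \<Rightarrow> (nat \<Rightarrow> nat) \<Rightarrow> nat \<Rightarrow> 'a" where
  "orbit_tuple f x r ns = restrict (\<lambda>i. (f ^^ ns i) x) {..<r}"

lemma orbit_tuple_in_prod_space:
  assumes "continuous_map (top_of_set X) (top_of_set X) f" and "x \<in> X"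
  shows "orbit_tuple f x r ns \<in> topspace (prod_space X r)"
  using funpow_mem_invariant[OF continuous_map_image_subset_topspace[OF assms(1)]] assms(2)
  by (auto simp: orbit_tuple_def)

lemma Trans_F_subset: "Trans_F X f Fam \<subseteq> X"
  unfolding Trans_F_def by blast

lemma funpow_prod_map_orbit_tuple:
  "i < length a \<Longrightarrow>
    (prod_map f a ^^ m) (orbit_tuple f x (length a) ns) i = (f ^^ (a ! i * m + ns i)) x"
  by (simp add: funpow_prod_map orbit_tuple_def funpow_add)

text \<open>The tuple (f^n_1 x, ..., f^n_r x) returns to U^r syndetically, and each return
  time m gives hits a_i m + n_i of x in U.\<close>
lemma Fs_hit_times_if_multi_minimal_wrt:
  assumes "compact X" and f: "continuous_map (top_of_set X) (top_of_set X) f"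
    and a: "\<forall>i<length a. 1 \<le> a ! i" and "multi_minimal_wrt X f a"
    and x: "x \<in> X" and U: "openin (top_of_set X) U" "U \<noteq> {}"
  shows "Fs a (hit_times f x U)"
  unfolding Fs_def
proof (intro allI impI)
  fix ns :: "nat list"
  let ?g = "prod_map f a"
  define y where "y = orbit_tuple f x (length a) ((!) ns)"
  define V where "V = PiE {..<length a} (\<lambda>_. U)"
  define F' where "F' = {m. 1 \<le> m \<and> (?g ^^ m) y \<in> V}"
  have y: "y \<in> topspace (prod_space X (length a))"
    unfolding y_def by (rule orbit_tuple_in_prod_space[OF f x])
  have "openin (prod_space X (length a)) V"
    unfolding V_def by (rule openin_prod_space_PiE) (rule U(1))
  moreover have "V \<noteq> {}"
    using U(2) by (simp add: V_def PiE_eq_empty_iff)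
  ultimately obtain K where K: "\<forall>n. \<exists>k. 1 \<le> k \<and> k \<le> K \<and> (?g ^^ (n + k)) y \<in> V"
    using minimal_sys_bounded_return_gaps[OF compact_space_prod_space[OF assms(1)]
        continuous_map_prod_map[OF f] assms(4)[unfolded multi_minimal_wrt_def] _ _ y]
    by blast
  have "syndetic F'"
    unfolding syndetic_iff_bounded_gaps
  proof (rule exI[of _ K], rule allI)
    fix n
    obtain k where "1 \<le> k" "k \<le> K" "(?g ^^ (n + k)) y \<in> V"
      using K by blast
    then show "\<exists>k. 1 \<le> k \<and> k \<le> K \<and> n + k \<in> F'"
      by (auto simp: F'_def)
  qed
  moreover have "a ! i * m + ns ! i \<in> hit_times f x U" if "i < length a" "m \<in> F'" for i m
  proof -
    have "(?g ^^ m) y i \<in> U"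
      using that by (auto simp: F'_def V_def PiE_iff)
    moreover have "1 \<le> a ! i * m + ns ! i"
    proof -
      have "1 \<le> a ! i * m"
        using a that by (simp add: F'_def)
      then show ?thesis by linarith
    qed
    ultimately show ?thesis
      using that(1) by (simp add: hit_times_def y_def funpow_prod_map_orbit_tuple)
  qed
  moreover have "0 \<notin> F'"
    by (simp add: F'_def)
  ultimately show "\<exists>F'. 0 \<notin> F' \<and> syndetic F' \<and>
      (\<forall>i<length a. \<forall>m\<in>F'. a ! i * m + ns ! i \<in> hit_times f x U)"
    by blast
qed

lemma Fs_transitive_orbit_dense:
  assumes "a \<noteq> []" and x: "x \<in> Trans_F X f (Fs a)"
    and U: "openin (top_of_set X) U" "U \<noteq> {}"
  shows "\<exists>n. (f ^^ n) x \<in> U"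
proof -
  have "Fs a (hit_times f x U)"
    using x U by (simp add: Trans_F_def)
  then obtain F' where F': "syndetic F'" "\<forall>m\<in>F'. a ! 0 * m \<in> hit_times f x U"
    unfolding Fs_def using assms(1) by (fastforce dest!: spec[of _ "replicate (length a) 0"])
  then obtain m where "m \<in> F'"
    unfolding syndetic_iff_bounded_gaps by blast
  then show ?thesis
    using F'(2) unfolding hit_times_def by blast
qed

text \<open>Applying Fs to the open set of points y with f^p_i y \<in> U_i for all i, which
  contains x.\<close>
lemma Fs_transitive_orbit_tuple_returns:
  assumes f: "continuous_map (top_of_set X) (top_of_set X) f" and "a \<noteq> []"
    and x: "x \<in> Trans_F X f (Fs a)"
    and U: "\<And>i. i < length a \<Longrightarrow> openin (top_of_set X) (U i)"
    and p: "\<And>i. i < length a \<Longrightarrow> (f ^^ p i) x \<in> U i"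
  shows "\<exists>F'. syndetic F' \<and> (\<forall>m\<in>F'.
    (prod_map f a ^^ m) (orbit_tuple f x (length a) (\<lambda>i. ns i + p i)) \<in> PiE {..<length a} U)"
proof -
  let ?r = "length a" and ?g = "prod_map f a"
  define W where "W = (\<Inter>i\<in>{..<?r}. {y \<in> topspace (top_of_set X). (f ^^ p i) y \<in> U i})"
  have "openin (top_of_set X) W"
    unfolding W_def
  proof (rule openin_INT2)
    fix i assume "i \<in> {..<?r}"
    then show "openin (top_of_set X) {y \<in> topspace (top_of_set X). (f ^^ p i) y \<in> U i}"
      using U by (intro openin_continuous_map_preimage[OF continuous_map_funpow[OF f]]) auto
  qed (use assms(2) in auto)
  moreover have "x \<in> W"
    using x p by (auto simp: W_def Trans_F_def)
  ultimately have "Fs a (hit_times f x W)"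
    using x by (auto simp: Trans_F_def)
  then obtain F' where F': "syndetic F'" "\<forall>i<?r. \<forall>m\<in>F'. a ! i * m + ns i \<in> hit_times f x W"
    unfolding Fs_def by (fastforce dest!: spec[of _ "map ns [0..<length a]"])
  have "(?g ^^ m) (orbit_tuple f x ?r (\<lambda>i. ns i + p i)) \<in> PiE {..<?r} U" if "m \<in> F'" for m
  proof -
    have "(f ^^ (a ! i * m + (ns i + p i))) x \<in> U i" if "i < ?r" for i
    proof -
      have "(f ^^ p i) ((f ^^ (a ! i * m + ns i)) x) \<in> U i"
        using F'(2) \<open>m \<in> F'\<close> that by (simp add: hit_times_def W_def)
      then show ?thesis
        by (metis (no_types) add.assoc add.commute comp_apply funpow_add)
    qed
    moreover have "(?g ^^ m) (orbit_tuple f x ?r (\<lambda>i. ns i + p i)) \<in> topspace (prod_space X ?r)"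
      using funpow_mem_invariant[OF continuous_map_image_subset_topspace[OF continuous_map_prod_map[OF f]]
          orbit_tuple_in_prod_space[OF f subsetD[OF Trans_F_subset x]]] .
    ultimately show ?thesis
      by (simp add: PiE_iff funpow_prod_map_orbit_tuple)
  qed
  then show ?thesis
    using F'(1) by blast
qed

lemma uniformly_recurrent_orbit_tuple:
  assumes f: "continuous_map (top_of_set X) (top_of_set X) f" and "a \<noteq> []"
    and x: "x \<in> Trans_F X f (Fs a)"
  shows "uniformly_recurrent (prod_space X (length a)) (prod_map f a) (orbit_tuple f x (length a) ns)"
  unfolding uniformly_recurrent_def
proof (intro allI impI)
  fix V assume "openin (prod_space X (length a)) V \<and> orbit_tuple f x (length a) ns \<in> V"
  then obtain U where U: "\<And>i. i < length a \<Longrightarrow> openin (top_of_set X) (U i)"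
    "orbit_tuple f x (length a) ns \<in> PiE {..<length a} U" "PiE {..<length a} U \<subseteq> V"
    by (meson openin_prod_space_box)
  then obtain F' where F': "syndetic F'"
    "\<forall>m\<in>F'. (prod_map f a ^^ m) (orbit_tuple f x (length a) ns) \<in> PiE {..<length a} U"
    using Fs_transitive_orbit_tuple_returns[OF f assms(2) x, where U=U and p=ns and ns="\<lambda>_. 0"]
    by (auto simp: orbit_tuple_def PiE_iff)
  then obtain L where L: "\<forall>k. \<exists>l. 1 \<le> l \<and> l \<le> L \<and> k + l \<in> F'"
    unfolding syndetic_iff_bounded_gaps by blast
  have "\<exists>l\<le>L. (prod_map f a ^^ (k + l)) (orbit_tuple f x (length a) ns) \<in> V" for k
  proof -
    obtain l where "l \<le> L" "k + l \<in> F'"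
      using L by blast
    then show ?thesis
      using F'(2) U(3) by blast
  qed
  then show "\<exists>L. \<forall>k. \<exists>l\<le>L. (prod_map f a ^^ (k + l)) (orbit_tuple f x (length a) ns) \<in> V"
    by blast
qed

lemma diagonal_in_closure_orbit_of_orbit_tuple:
  assumes f: "continuous_map (top_of_set X) (top_of_set X) f" and "a \<noteq> []"
    and x: "x \<in> Trans_F X f (Fs a)"
  shows "orbit_tuple f x (length a) (\<lambda>_. 0) \<in>
    prod_space X (length a) closure_of orbit (prod_map f a) (orbit_tuple f x (length a) ns)"
  unfolding in_closure_of
proof (intro conjI allI impI)
  show "orbit_tuple f x (length a) (\<lambda>_. 0) \<in> topspace (prod_space X (length a))"
    using orbit_tuple_in_prod_space[OF f subsetD[OF Trans_F_subset x]] .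
  fix V assume "orbit_tuple f x (length a) (\<lambda>_. 0) \<in> V \<and> openin (prod_space X (length a)) V"
  then obtain U where U: "\<And>i. i < length a \<Longrightarrow> openin (top_of_set X) (U i)"
    "orbit_tuple f x (length a) (\<lambda>_. 0) \<in> PiE {..<length a} U" "PiE {..<length a} U \<subseteq> V"
    by (meson openin_prod_space_box)
  then obtain F' where F': "syndetic F'"
    "\<forall>m\<in>F'. (prod_map f a ^^ m) (orbit_tuple f x (length a) ns) \<in> PiE {..<length a} U"
    using Fs_transitive_orbit_tuple_returns[OF f assms(2) x, where U=U and p="\<lambda>_. 0" and ns=ns]
    by (auto simp: orbit_tuple_def PiE_iff)
  then obtain m where "m \<in> F'"
    unfolding syndetic_iff_bounded_gaps by blast
  then show "\<exists>y. y \<in> orbit (prod_map f a) (orbit_tuple f x (length a) ns) \<and> y \<in> V"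
    using F'(2) U(3) unfolding orbit_def by blast
qed

lemma orbit_tuples_dense:
  assumes dense: "\<And>U. openin (top_of_set X) U \<Longrightarrow> U \<noteq> {} \<Longrightarrow> \<exists>n. (f ^^ n) x \<in> U"
    and V: "openin (prod_space X r) V" "q \<in> V"
  shows "\<exists>ns. orbit_tuple f x r ns \<in> V"
proof -
  obtain U where U: "\<And>i. i < r \<Longrightarrow> openin (top_of_set X) (U i)"
    "q \<in> PiE {..<r} U" "PiE {..<r} U \<subseteq> V"
    using openin_prod_space_box[OF V] by blast
  have "\<forall>i. \<exists>n. i < r \<longrightarrow> (f ^^ n) x \<in> U i"
    using dense U(1,2) by (metis PiE_E empty_iff lessThan_iff)
  then obtain ns where "\<And>i. i < r \<Longrightarrow> (f ^^ ns i) x \<in> U i"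
    by metis
  then have "orbit_tuple f x r ns \<in> PiE {..<r} U"
    by (simp add: orbit_tuple_def)
  then show ?thesis
    using U(3) by blast
qed

text \<open>The diagonal point (x, ..., x) is uniformly recurrent, and its orbit closure
  contains every tuple (f^n_1 x, ..., f^n_r x); these tuples are dense because the
  orbit of x is.\<close>
lemma multi_minimal_wrt_if_Fs_transitive:
  fixes X :: "'a::metric_space set"
  assumes f: "continuous_map (top_of_set X) (top_of_set X) f" and "a \<noteq> []"
    and x: "x \<in> Trans_F X f (Fs a)"
  shows "multi_minimal_wrt X f a"
proof -
  let ?T = "prod_space X (length a)" and ?g = "prod_map f a"
  let ?w = "orbit_tuple f x (length a)"
  define z where "z = ?w (\<lambda>_. 0)"
  have g: "continuous_map ?T ?T ?g"
    by (rule continuous_map_prod_map[OF f])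
  have wT: "?w ns \<in> topspace ?T" for ns
    using orbit_tuple_in_prod_space[OF f subsetD[OF Trans_F_subset x]] .
  have z_closure: "z \<in> ?T closure_of orbit ?g z"
    unfolding z_def by (rule subsetD[OF closure_of_subset[OF orbit_subset_topspace[OF g wT]] self_in_orbit])
  have w_closure: "?w ns \<in> ?T closure_of orbit ?g z" for ns
    by (rule uniformly_recurrent_mem_closed_invariant[OF regular_space_prod_space g
        uniformly_recurrent_orbit_tuple[OF f assms(2) x] wT
        diagonal_in_closure_orbit_of_orbit_tuple[OF f assms(2) x, folded z_def]
        closedin_closure_of closure_orbit_invariant[OF g] z_closure])
  have "q \<in> ?T closure_of (?T closure_of orbit ?g z)" if "q \<in> topspace ?T" for q
    using that w_closure orbit_tuples_dense[OF Fs_transitive_orbit_dense[OF assms(2) x]]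
    unfolding in_closure_of by meson
  then have "?T closure_of orbit ?g z = topspace ?T"
    using closure_of_subset_topspace[of ?T "orbit ?g z"] by auto
  then show ?thesis
    unfolding multi_minimal_wrt_def
    using minimal_sys_if_uniformly_recurrent_dense_orbit[OF regular_space_prod_space g
        uniformly_recurrent_orbit_tuple[OF f assms(2) x] wT] z_def by simp
qed

lemma multi_minimal_wrt_iff_Trans_F_Fs:
  fixes X :: "'a::metric_space set"
  assumes "compact X" and "X \<noteq> {}" and f: "continuous_map (top_of_set X) (top_of_set X) f"
    and a: "admissible_vec a"
  shows "(multi_minimal_wrt X f a \<longleftrightarrow> Trans_F X f (Fs a) \<noteq> {}) \<and>
    (Trans_F X f (Fs a) \<noteq> {} \<longleftrightarrow> Trans_F X f (Fs a) = X)"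
proof -
  have "a \<noteq> []" and pos: "\<forall>i<length a. 1 \<le> a ! i"
    using a by (auto simp: admissible_vec_def)
  have "Trans_F X f (Fs a) = X" if mm: "multi_minimal_wrt X f a"
  proof -
    have "x \<in> Trans_F X f (Fs a)" if "x \<in> X" for x
      using Fs_hit_times_if_multi_minimal_wrt[OF assms(1) f pos mm that] that
      by (simp add: Trans_F_def)
    then show ?thesis
      using Trans_F_subset by blast
  qed
  moreover have "multi_minimal_wrt X f a" if "x \<in> Trans_F X f (Fs a)" for x
    by (rule multi_minimal_wrt_if_Fs_transitive[OF f \<open>a \<noteq> []\<close> that])
  ultimately show ?thesis
    using assms(2) by blast
qed

lemma admissible_vec_upt: "1 \<le> i \<Longrightarrow> admissible_vec [1..<i + 1]"
  unfolding admissible_vec_def by (simp del: upt_Suc add: nth_upt)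

lemma Trans_F_Fs_inf: "Trans_F X f Fs_inf = X \<inter> (\<Inter>i\<in>{1..}. Trans_F X f (Fs [1..<i + 1]))"
  unfolding Trans_F_def Fs_inf_def by auto

theorem theorem6p4:
  fixes X :: "'a::metric_space set" and f :: "'a \<Rightarrow> 'a"
  assumes "compact X" and "X \<noteq> {}" and "continuous_on X f" and "f ` X \<subseteq> X"
  shows "(\<forall>a. admissible_vec a \<longrightarrow>
            (multi_minimal_wrt X f a \<longleftrightarrow> Trans_F X f (Fs a) \<noteq> {}) \<and>
            (Trans_F X f (Fs a) \<noteq> {} \<longleftrightarrow> Trans_F X f (Fs a) = X)) \<and>
         (multi_minimal X f \<longleftrightarrow> Trans_F X f Fs_inf \<noteq> {}) \<and>
         (Trans_F X f Fs_inf \<noteq> {} \<longleftrightarrow> Trans_F X f Fs_inf = X)"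
proof -
  note equiv = multi_minimal_wrt_iff_Trans_F_Fs[OF assms(1,2)
      continuous_map_top_of_set_self[OF assms(3,4)]]
  have "multi_minimal_wrt X f [1..<i + 1] \<longleftrightarrow> Trans_F X f (Fs [1..<i + 1]) = X"
    and "Trans_F X f (Fs [1..<i + 1]) \<noteq> {} \<longleftrightarrow> Trans_F X f (Fs [1..<i + 1]) = X"
    if "1 \<le> i" for i
    using equiv[OF admissible_vec_upt[OF that]] by blast+
  then have "multi_minimal X f \<longleftrightarrow> Trans_F X f Fs_inf = X"
    and "Trans_F X f Fs_inf \<noteq> {} \<longleftrightarrow> Trans_F X f Fs_inf = X"
    using assms(2) by (auto simp: multi_minimal_def Trans_F_Fs_inf)
  then show ?thesis
    using equiv assms(2) by blast
qed

end
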